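(* Let $n\ge3$, $\alpha<1$, $q\in[1,\infty)$ and $x\in\mathbb{B}^n$. (1) If $q=\frac{2n-2}{n-\alpha}$ or $q=\frac{2n}{n-\alpha}$, then $l\mapsto I(\alpha,q,x,l)$ is constant on $\mathbb{S}^{n-1}$. (2) If $\frac{2n-2}{n-\alpha}<q<\frac{2n}{n-\alpha}$, then $\sup_{l\in\mathbb{S}^{n-1}}I(\alpha,q,x,l)=\max_{\beta\in[0,\pi/2]}I(\alpha,q,|x|e_1,l_\beta)=I(\alpha,q,|x|e_1,l_{\pi/2})$. (3) If $1\le q<\frac{2n-2}{n-\alpha}$ or $q>\frac{2n}{n-\alpha}$, then $\sup_{l\in\mathbb{S}^{n-1}}I(\alpha,q,x,l)=\max_{\beta\in[0,\pi/2]}I(\alpha,q,|x|e_1,l_\beta)=I(\alpha,q,|x|e_1,l_0)$.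
   Context: $\mathbb{B}^n$ is the open unit ball of $\mathbb{R}^n$, $\mathbb{S}^{n-1}$ the unit sphere with normalized surface measure $\sigma$; $e_i$ is the $i$-th standard unit vector and $l_\beta=\cos\beta\, e_1+\sin\beta\, e_2$. $I(\alpha,q,x,l)=\int_{\mathbb{S}^{n-1}}|\eta-x|^{(n-\alpha)q-2n+2}|\langle\eta,l\rangle|^q d\sigma(\eta)$. *)

theory Defs
  imports "HOL-Analysis.Analysis"
begin

text \<open>Integral against the normalized surface measure sigma on the unit sphere,
  realised via the cone-measure identity
  int_S f dsigma = (1 / |B|) int_B f(y / |y|) dy.\<close>
definition sphere_avg :: "('a::euclidean_space \<Rightarrow> real) \<Rightarrow> real" where
  "sphere_avg f =
     (LINT y : ball (0::'a) 1 | lborel. f (y /\<^sub>R norm y)) / measure lborel (ball (0::'a) 1)"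

definition I_int :: "real \<Rightarrow> real \<Rightarrow> 'a::euclidean_space \<Rightarrow> 'a \<Rightarrow> real" where
  "I_int \<alpha> q x l = sphere_avg (\<lambda>\<eta>.
      norm (\<eta> - x) powr ((real DIM('a) - \<alpha>) * q - 2 * real DIM('a) + 2) * \<bar>\<eta> \<bullet> l\<bar> powr q)"

definition l_vec :: "'a::real_vector \<Rightarrow> 'a \<Rightarrow> real \<Rightarrow> 'a" where
  "l_vec e1 e2 \<beta> = cos \<beta> *\<^sub>R e1 + sin \<beta> *\<^sub>R e2"

end

theory Submission
  imports Defs
begin

text \<open>Put \<open>e = (n - \<alpha>) q - 2n + 2\<close>, so that \<open>I(\<alpha>,q,x,l)\<close> averages
  \<open>\<bar>\<eta> - x\<bar>\<^sup>e \<bar>\<langle>\<eta>,l\<rangle>\<bar>\<^sup>q\<close> over the sphere; the thresholds on \<open>q\<close> are exactly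
  \<open>e = 0\<close> and \<open>e = 2\<close>. Write \<open>x = r u\<close> with \<open>\<bar>u\<bar> = 1\<close>. Averaging over \<open>\<eta>\<close> and \<open>-\<eta>\<close>
  replaces \<open>\<bar>\<eta> - x\<bar>\<^sup>e\<close> by \<open>\<Phi>(\<langle>\<eta>,u\<rangle>)\<close>, where
  \<open>\<Phi>(s) = ((1 + r\<^sup>2 - 2rs)\<^bsup>e/2\<^esup> + (1 + r\<^sup>2 + 2rs)\<^bsup>e/2\<^esup>) / 2\<close> is even, increasing in \<open>\<bar>s\<bar>\<close>
  if \<open>e \<le> 0\<close> or \<open>e \<ge> 2\<close> and decreasing if \<open>0 \<le> e \<le> 2\<close>.
  For unit vectors \<open>l1, l2\<close> and the reflection \<open>R\<close> exchanging them, rotation invariance of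
  \<open>\<sigma>\<close> gives
  \<open>2 (I(l1) - I(l2)) = \<integral> (\<Phi>(\<langle>\<eta>,u\<rangle>) - \<Phi>(\<langle>R\<eta>,u\<rangle>)) (\<bar>\<langle>\<eta>,l1\<rangle>\<bar>\<^sup>q - \<bar>\<langle>\<eta>,l2\<rangle>\<bar>\<^sup>q) d\<sigma>\<close>,
  and if \<open>u = \<mu> l1 + \<nu> l2\<close> with \<open>\<bar>\<nu>\<bar> \<le> \<bar>\<mu>\<bar>\<close> the integrand has constant sign. Taking \<open>l1 = u\<close>
  shows that \<open>I\<close> is maximal at \<open>l = u\<close> in the first regime, minimal there in the second
  (hence constant when \<open>e \<in> {0, 2}\<close>); writing an arbitrary \<open>u\<close> in terms of \<open>l\<close> and a unit
  vector orthogonal to \<open>u\<close> shows that in the second regime \<open>I\<close> is maximal on \<open>u\<^sup>\<perp>\<close>.\<close>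

section \<open>Invariance of Lebesgue measure under orthogonal maps\<close>

text \<open>The library proves this invariance only on \<open>real^'n\<close>. Coordinates with respect to
  \<^const>\<open>Basis\<close>, indexed by the following type, transfer it to any Euclidean space.\<close>

typedef (overloaded) ('a::euclidean_space) basis_index = "Basis :: 'a set"
  morphisms basis_vector Abs_basis_index
  using nonempty_Basis by blast

lemma range_basis_vector: "range basis_vector = Basis"
  by (rule type_definition.Rep_range[OF type_definition_basis_index])

lemma bij_basis_vector: "bij_betw basis_vector (UNIV :: 'a::euclidean_space basis_index set) Basis"
  unfolding bij_betw_def using range_basis_vector by (auto intro: inj_onI simp: basis_vector_inject)

lemma inner_basis_vector: "basis_vector i \<bullet> basis_vector j = (if i = j then 1 else 0)"
  using basis_vector[of i] basis_vector[of j] by (simp add: inner_Basis basis_vector_inject)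

instance basis_index :: (euclidean_space) finite
proof
  show "finite (UNIV :: 'a basis_index set)"
    using bij_basis_vector finite_Basis bij_betw_finite by blast
qed

text \<open>Any linear order will do; one is needed only because the library lemmas on \<open>real^'n\<close>
  require an index type of class \<^class>\<open>wellorder\<close>.\<close>

instantiation basis_index :: (euclidean_space) wellorder
begin

definition less_eq_basis_index :: "'a basis_index \<Rightarrow> 'a basis_index \<Rightarrow> bool" where
  "i \<le> j \<longleftrightarrow> to_nat_on Basis (basis_vector i) \<le> to_nat_on Basis (basis_vector j)"

definition less_basis_index :: "'a basis_index \<Rightarrow> 'a basis_index \<Rightarrow> bool" where
  "i < j \<longleftrightarrow> to_nat_on Basis (basis_vector i) < to_nat_on Basis (basis_vector j)"

instance
proof
  have inj: "inj (\<lambda>i::'a basis_index. to_nat_on Basis (basis_vector i))"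
    by (metis (no_types, lifting) inj_onI inj_onD basis_vector basis_vector_inject
        inj_on_to_nat_on countable_finite finite_Basis)
  show "i \<le> j \<Longrightarrow> j \<le> i \<Longrightarrow> i = j" for i j :: "'a basis_index"
    using inj by (auto simp: less_eq_basis_index_def dest: injD)
  fix P :: "'a basis_index \<Rightarrow> bool" and a
  assume step: "\<And>i. (\<And>j. j < i \<Longrightarrow> P j) \<Longrightarrow> P i"
  have "\<forall>i. to_nat_on Basis (basis_vector i) = k \<longrightarrow> P i" for k
    by (induction k rule: less_induct) (metis step less_basis_index_def)
  then show "P a" by blast
qed (auto simp: less_eq_basis_index_def less_basis_index_def)

end

definition coords :: "'a::euclidean_space \<Rightarrow> real^'a basis_index" where
  "coords x = (\<chi> i. x \<bullet> basis_vector i)"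

definition from_coords :: "real^'a basis_index \<Rightarrow> 'a::euclidean_space" where
  "from_coords v = (\<Sum>i\<in>UNIV. v $ i *\<^sub>R basis_vector i)"

lemma inner_from_coords_basis_vector: "from_coords v \<bullet> basis_vector j = v $ j"
  by (simp add: from_coords_def inner_sum_left inner_basis_vector if_distrib cong: if_cong)

lemma coords_from_coords [simp]: "coords (from_coords v) = v"
  by (simp add: coords_def inner_from_coords_basis_vector vec_eq_iff)

lemma from_coords_coords [simp]: "from_coords (coords x) = x"
  unfolding from_coords_def coords_def
  using sum.reindex_bij_betw[OF bij_basis_vector, of "\<lambda>b. (x \<bullet> b) *\<^sub>R b"]
  by (simp add: euclidean_representation)

lemma linear_coords: "linear coords"
  by (rule linearI) (simp_all add: coords_def vec_eq_iff inner_add_left)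

lemma linear_from_coords: "linear from_coords"
  by (rule linearI) (simp_all add: from_coords_def scaleR_add_left sum.distrib scaleR_sum_right)

lemma inner_coords: "coords x \<bullet> coords y = x \<bullet> y"
proof -
  have "coords x \<bullet> coords y = (\<Sum>i\<in>UNIV. (x \<bullet> basis_vector i) * (y \<bullet> basis_vector i))"
    by (simp add: inner_vec_def coords_def)
  also have "\<dots> = (\<Sum>b\<in>Basis. (x \<bullet> b) * (y \<bullet> b))"
    by (rule sum.reindex_bij_betw[OF bij_basis_vector])
  finally show ?thesis
    by (simp only: euclidean_inner[of x y])
qed

lemma inner_from_coords: "from_coords v \<bullet> from_coords w = v \<bullet> w"
  by (metis inner_coords coords_from_coords)

lemma linear_borel_measurable:
  fixes f :: "'a::euclidean_space \<Rightarrow> 'b::euclidean_space"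
  shows "linear f \<Longrightarrow> f \<in> borel_measurable borel"
  by (intro borel_measurable_continuous_onI linear_continuous_on)
     (simp add: linear_conv_bounded_linear)

lemma lborel_distr_orthogonal_transformation_cart:
  fixes T :: "real^'n::{finite,wellorder} \<Rightarrow> real^'n::_"
  assumes T: "orthogonal_transformation T"
  shows "distr lborel borel T = lborel"
proof (rule lborel_eqI[symmetric])
  fix l u :: "(real, 'n) vec"
  assume le: "\<And>b. b \<in> Basis \<Longrightarrow> l \<bullet> b \<le> u \<bullet> b"
  have meas: "T \<in> borel_measurable borel"
    using T by (intro linear_borel_measurable orthogonal_transformation_linear)
  have pre: "T -` box l u = inv T ` box l u"
    using orthogonal_transformation_bij[OF T] by (simp add: bij_vimage_eq_inv_image)
  have Tbox: "T -` box l u \<in> sets borel"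
    using measurable_sets_borel[OF meas] by simp
  have "emeasure (distr lborel borel T) (box l u) = emeasure lborel (T -` box l u)"
    by (subst emeasure_distr) (use meas in auto)
  also have "\<dots> = emeasure lebesgue (T -` box l u)"
    using Tbox by simp
  also have "\<dots> = emeasure lebesgue (box l u)"
    using orthogonal_transformation_inv[OF T] unfolding pre
    by (simp add: emeasure_eq_measure2 measurable_orthogonal_image measure_orthogonal_image)
  also have "\<dots> = (\<Prod>b\<in>Basis. (u - l) \<bullet> b)"
    using le by simp
  finally show "emeasure (distr lborel borel T) (box l u) = (\<Prod>b\<in>Basis. (u - l) \<bullet> b)" .
qed simp

lemma box_coords_vimage: "from_coords -` box l u = box (coords l) (coords u)"
proof -
  have "from_coords v \<in> box l u \<longleftrightarrow> v \<in> box (coords l) (coords u)" for v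
  proof -
    have "from_coords v \<in> box l u
        \<longleftrightarrow> (\<forall>i. l \<bullet> basis_vector i < from_coords v \<bullet> basis_vector i
                 \<and> from_coords v \<bullet> basis_vector i < u \<bullet> basis_vector i)"
      unfolding mem_box range_basis_vector[symmetric] by simp
    then show ?thesis by (simp add: mem_box_cart inner_from_coords_basis_vector coords_def)
  qed
  then show ?thesis by auto
qed

lemma lborel_distr_from_coords:
  "distr (lborel :: (real^'a::euclidean_space basis_index) measure) borel from_coords = (lborel :: 'a measure)"
proof (rule lborel_eqI[symmetric])
  fix l u :: 'a
  assume le: "\<And>b. b \<in> Basis \<Longrightarrow> l \<bullet> b \<le> u \<bullet> b"
  have prod_Basis_vec: "(\<Prod>b\<in>(Basis :: (real^'a basis_index) set). f b) = (\<Prod>i\<in>UNIV. f (axis i 1))"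
    for f :: "real^'a basis_index \<Rightarrow> real"
  proof -
    have B: "(Basis :: (real^'a basis_index) set) = range (\<lambda>i. axis i 1)"
      by (auto simp: Basis_vec_def)
    have "inj (\<lambda>i::'a basis_index. axis i (1::real))"
      by (auto simp: inj_on_def axis_eq_axis)
    then show ?thesis unfolding B by (simp add: prod.reindex)
  qed
  have le': "\<And>b. b \<in> Basis \<Longrightarrow> coords l \<bullet> b \<le> coords u \<bullet> b"
    using le[OF basis_vector] by (auto simp: Basis_vec_def inner_axis coords_def)
  have "emeasure (distr lborel borel from_coords) (box l u) = emeasure lborel (box (coords l) (coords u))"
    by (subst emeasure_distr)
       (use linear_borel_measurable[OF linear_from_coords] in \<open>auto simp: box_coords_vimage\<close>)
  also have "\<dots> = (\<Prod>i\<in>UNIV. (u - l) \<bullet> basis_vector i)"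
    using le' by (simp add: prod_Basis_vec inner_axis coords_def inner_diff_left)
  also have "\<dots> = (\<Prod>b\<in>Basis. (u - l) \<bullet> b)"
    using prod.reindex_bij_betw[OF bij_basis_vector, of "\<lambda>b. (u - l) \<bullet> b"] by simp
  finally show "emeasure (distr lborel borel from_coords) (box l u) = (\<Prod>b\<in>Basis. (u - l) \<bullet> b)" .
qed simp

lemma lborel_distr_orthogonal_transformation:
  fixes T :: "'a::euclidean_space \<Rightarrow> 'a"
  assumes T: "orthogonal_transformation T"
  shows "distr lborel borel T = lborel"
proof -
  define T' where "T' = coords \<circ> T \<circ> from_coords"
  have linT: "linear T" using T by (rule orthogonal_transformation_linear)
  have "orthogonal_transformation T'"
    using T unfolding orthogonal_transformation_def T'_def
    by (auto intro: linear_compose linear_coords linear_from_coords simp: inner_coords inner_from_coords)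
  then have lborel_T': "distr lborel borel T' = lborel"
    by (rule lborel_distr_orthogonal_transformation_cart)
  have [measurable]: "T \<in> borel_measurable borel" "from_coords \<in> borel_measurable borel"
    "T' \<in> borel_measurable borel"
    using linT linear_coords linear_from_coords unfolding T'_def
    by (auto intro!: linear_borel_measurable linear_compose)
  have "distr lborel borel T = distr (distr lborel borel from_coords) borel T"
    by (simp add: lborel_distr_from_coords)
  also have "\<dots> = distr lborel borel (from_coords \<circ> T')"
    by (simp add: distr_distr T'_def comp_assoc[symmetric] o_def)
  also have "\<dots> = distr (distr lborel borel T') borel from_coords"
    by (simp add: distr_distr)
  also have "\<dots> = lborel"
    by (simp add: lborel_T' lborel_distr_from_coords)
  finally show ?thesis .
qed

section \<open>Averages over the unit sphere\<close>

definition sphere_admissible :: "('a::euclidean_space \<Rightarrow> real) \<Rightarrow> bool" where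
  "sphere_admissible f \<longleftrightarrow> f \<in> borel_measurable borel \<and> continuous_on (sphere 0 1) f"

lemma sphere_admissible_const: "sphere_admissible (\<lambda>\<eta>. c)"
  by (simp add: sphere_admissible_def)

lemma sphere_admissible_add:
  "sphere_admissible f \<Longrightarrow> sphere_admissible g \<Longrightarrow> sphere_admissible (\<lambda>\<eta>. f \<eta> + g \<eta>)"
  unfolding sphere_admissible_def by (auto intro: continuous_intros)

lemma sphere_admissible_diff:
  "sphere_admissible f \<Longrightarrow> sphere_admissible g \<Longrightarrow> sphere_admissible (\<lambda>\<eta>. f \<eta> - g \<eta>)"
  unfolding sphere_admissible_def by (auto intro: continuous_intros)

lemma sphere_admissible_mult:
  "sphere_admissible f \<Longrightarrow> sphere_admissible g \<Longrightarrow> sphere_admissible (\<lambda>\<eta>. f \<eta> * g \<eta>)"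
  unfolding sphere_admissible_def by (auto intro: continuous_intros)

lemma sphere_admissible_orthogonal_transformation:
  assumes T: "orthogonal_transformation T" and f: "sphere_admissible f"
  shows "sphere_admissible (\<lambda>\<eta>. f (T \<eta>))"
proof -
  have lin: "linear T" using T by (rule orthogonal_transformation_linear)
  have "T ` sphere 0 1 \<subseteq> sphere 0 1"
    using T by (auto simp: orthogonal_transformation_norm)
  moreover have "continuous_on (sphere 0 1) T"
    using lin by (intro linear_continuous_on) (simp add: linear_conv_bounded_linear[symmetric])
  ultimately show ?thesis
    using f linear_borel_measurable[OF lin] unfolding sphere_admissible_def
    by (auto intro: measurable_compose continuous_on_compose2)
qed

lemma sphere_admissible_dist_powr:
  fixes x :: "'a::euclidean_space"
  assumes "norm x < 1"
  shows "sphere_admissible (\<lambda>\<eta>. norm (\<eta> - x) powr e)"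
proof -
  have "\<eta> - x \<noteq> 0" if "\<eta> \<in> sphere 0 1" for \<eta>
    using that assms by auto
  then show ?thesis
    unfolding sphere_admissible_def by (auto intro!: continuous_intros)
qed

lemma sphere_admissible_abs_inner_powr:
  fixes l :: "'a::euclidean_space"
  assumes "0 < q"
  shows "sphere_admissible (\<lambda>\<eta>. \<bar>\<eta> \<bullet> l\<bar> powr q)"
  unfolding sphere_admissible_def
  by (intro conjI borel_measurable_continuous_onI continuous_on_powr' continuous_intros) (use assms in auto)

lemma set_integrable_sphere_admissible:
  assumes "sphere_admissible f"
  shows "set_integrable lborel (ball (0::'a::euclidean_space) 1) (\<lambda>y. f (y /\<^sub>R norm y))"
proof -
  have "compact (f ` sphere 0 1)"
    using assms unfolding sphere_admissible_def by (intro compact_continuous_image) auto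
  then obtain B where B: "\<And>\<eta>. \<eta> \<in> sphere 0 1 \<Longrightarrow> \<bar>f \<eta>\<bar> \<le> B"
    by (fastforce dest: compact_imp_bounded simp: bounded_iff)
  have "\<bar>f (y /\<^sub>R norm y)\<bar> \<le> max B \<bar>f 0\<bar>" for y :: 'a
    using B[of "y /\<^sub>R norm y"] by (cases "y = 0") auto
  then show ?thesis
    using assms emeasure_bounded_finite[OF bounded_ball[of "0::'a" 1]]
    unfolding set_integrable_def sphere_admissible_def
    by (intro integrableI_bounded_set_indicator[where B="max B \<bar>f 0\<bar>"]) auto
qed

lemma sphere_avg_add:
  assumes "sphere_admissible f" "sphere_admissible g"
  shows "sphere_avg (\<lambda>\<eta>. f \<eta> + g \<eta>) = sphere_avg f + sphere_avg g"
  using set_integral_add(2)[OF assms[THEN set_integrable_sphere_admissible]]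
  by (simp add: sphere_avg_def add_divide_distrib)

lemma sphere_avg_diff:
  assumes "sphere_admissible f" "sphere_admissible g"
  shows "sphere_avg (\<lambda>\<eta>. f \<eta> - g \<eta>) = sphere_avg f - sphere_avg g"
  using set_integral_diff(2)[OF assms[THEN set_integrable_sphere_admissible]]
  by (simp add: sphere_avg_def diff_divide_distrib)

lemma sphere_avg_cmult: "sphere_avg (\<lambda>\<eta>. c * f \<eta>) = c * sphere_avg f"
  by (simp add: sphere_avg_def)

lemma sphere_avg_nonneg:
  assumes "\<And>\<eta>. \<eta> \<in> sphere 0 1 \<Longrightarrow> 0 \<le> f \<eta>"
  shows "0 \<le> sphere_avg (f :: 'a::euclidean_space \<Rightarrow> real)"
proof -
  have "AE y in lborel. 0 \<le> indicator (ball (0::'a) 1) y *\<^sub>R f (y /\<^sub>R norm y)"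
    using AE_lborel_singleton[of "0::'a"] by eventually_elim (simp add: assms indicator_def)
  then show ?thesis
    unfolding sphere_avg_def set_lebesgue_integral_def by (simp add: integral_nonneg_AE)
qed

lemma sphere_avg_orthogonal_transformation:
  fixes T :: "'a::euclidean_space \<Rightarrow> 'a"
  assumes T: "orthogonal_transformation T" and [measurable]: "f \<in> borel_measurable borel"
  shows "sphere_avg (\<lambda>\<eta>. f (T \<eta>)) = sphere_avg f"
proof -
  define H where "H y = indicator (ball (0::'a) 1) y *\<^sub>R f (y /\<^sub>R norm y)" for y
  have [measurable]: "T \<in> borel_measurable borel"
    using T by (intro linear_borel_measurable orthogonal_transformation_linear)
  have [measurable]: "ball (0::'a) 1 \<in> sets borel" "(\<lambda>y::'a. y /\<^sub>R norm y) \<in> borel_measurable borel"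
    by measurable
  have [measurable]: "H \<in> borel_measurable borel"
    unfolding H_def by measurable
  have "indicator (ball 0 1) y *\<^sub>R f (T (y /\<^sub>R norm y)) = H (T y)" for y
    using T by (simp add: H_def orthogonal_transformation_norm orthogonal_transformation_scaleR indicator_def)
  then have "(LINT y : ball (0::'a) 1 | lborel. f (T (y /\<^sub>R norm y))) = integral\<^sup>L lborel (\<lambda>y. H (T y))"
    by (simp add: set_lebesgue_integral_def)
  also have "\<dots> = integral\<^sup>L (distr lborel borel T) H"
    by (rule integral_distr[symmetric]) simp_all
  also have "\<dots> = (LINT y : ball (0::'a) 1 | lborel. f (y /\<^sub>R norm y))"
    unfolding lborel_distr_orthogonal_transformation[OF T] H_def set_lebesgue_integral_def ..
  finally show ?thesis by (simp add: sphere_avg_def)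
qed

section \<open>The radial profile\<close>

definition radial_profile :: "real \<Rightarrow> real \<Rightarrow> real \<Rightarrow> real" where
  "radial_profile r p s = ((1 + r\<^sup>2 - 2 * r * s) powr p + (1 + r\<^sup>2 + 2 * r * s) powr p) / 2"

lemma radial_profile_abs: "radial_profile r p \<bar>s\<bar> = radial_profile r p s"
  by (cases "0 \<le> s") (simp_all add: radial_profile_def)

lemma radial_profile_base_pos:
  fixes r s :: real
  assumes "0 \<le> r" "r < 1" "\<bar>s\<bar> \<le> 1"
  shows "0 < 1 + r\<^sup>2 - 2 * r * s"
proof -
  have "2 * r * s \<le> 2 * r"
    using assms by (simp add: mult_left_le abs_le_iff)
  moreover have "0 < (1 - r)\<^sup>2"
    using assms by simp
  ultimately show ?thesis
    by (simp add: power2_eq_square algebra_simps)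
qed

lemma has_real_derivative_radial_profile:
  assumes "0 \<le> r" "r < 1" "\<bar>s\<bar> \<le> 1"
  shows "(radial_profile r p has_real_derivative
           r * (p * ((1 + r\<^sup>2 + 2 * r * s) powr (p - 1) - (1 + r\<^sup>2 - 2 * r * s) powr (p - 1)))) (at s)"
proof -
  have "0 < 1 + r\<^sup>2 - 2 * r * s" "0 < 1 + r\<^sup>2 - 2 * r * (- s)"
    using assms by (intro radial_profile_base_pos; simp)+
  then show ?thesis
    unfolding radial_profile_def[abs_def]
    by (auto intro!: derivative_eq_intros simp: field_simps)
qed

text \<open>The profile averages \<open>t powr p\<close> over two points placed symmetrically about \<open>1 + r\<^sup>2\<close>,
  which move apart as \<open>\<bar>s\<bar>\<close> grows: it increases in \<open>\<bar>s\<bar>\<close> when \<open>t powr p\<close> is convex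
  and decreases when it is concave.\<close>

lemma radial_profile_mono_convex:
  assumes r: "0 \<le> r" "r < 1" and p: "p \<le> 0 \<or> 1 \<le> p" and ts: "\<bar>t\<bar> \<le> \<bar>s\<bar>" "\<bar>s\<bar> \<le> 1"
  shows "radial_profile r p t \<le> radial_profile r p s"
proof -
  have "radial_profile r p \<bar>t\<bar> \<le> radial_profile r p \<bar>s\<bar>"
  proof (rule DERIV_nonneg_imp_nondecreasing[OF ts(1)])
    fix y assume y: "\<bar>t\<bar> \<le> y" "y \<le> \<bar>s\<bar>"
    define M P where "M = 1 + r\<^sup>2 - 2 * r * y" and "P = 1 + r\<^sup>2 + 2 * r * y"
    have M: "0 < M"
      unfolding M_def using r y ts by (intro radial_profile_base_pos) auto
    have MP: "M \<le> P"
      unfolding M_def P_def using r y ts by simp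
    have "0 \<le> p * (P powr (p - 1) - M powr (p - 1))"
      using p
    proof
      assume "p \<le> 0"
      moreover have "P powr (p - 1) \<le> M powr (p - 1)"
        using \<open>p \<le> 0\<close> M MP by (intro powr_mono2') auto
      ultimately show ?thesis by (simp add: mult_nonpos_nonpos)
    next
      assume "1 \<le> p"
      moreover have "M powr (p - 1) \<le> P powr (p - 1)"
        using \<open>1 \<le> p\<close> M MP by (intro powr_mono2) auto
      ultimately show ?thesis by simp
    qed
    then show "\<exists>d. (radial_profile r p has_real_derivative d) (at y) \<and> 0 \<le> d"
      using has_real_derivative_radial_profile[of r y p] mult_nonneg_nonneg[OF r(1)] r y ts
      unfolding M_def P_def by auto
  qed
  then show ?thesis by (simp add: radial_profile_abs)
qed

lemma radial_profile_antimono_concave: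
  assumes r: "0 \<le> r" "r < 1" and p: "0 \<le> p" "p \<le> 1" and ts: "\<bar>t\<bar> \<le> \<bar>s\<bar>" "\<bar>s\<bar> \<le> 1"
  shows "radial_profile r p s \<le> radial_profile r p t"
proof -
  have "radial_profile r p \<bar>s\<bar> \<le> radial_profile r p \<bar>t\<bar>"
  proof (rule DERIV_nonpos_imp_nonincreasing[OF ts(1)])
    fix y assume y: "\<bar>t\<bar> \<le> y" "y \<le> \<bar>s\<bar>"
    define M P where "M = 1 + r\<^sup>2 - 2 * r * y" and "P = 1 + r\<^sup>2 + 2 * r * y"
    have M: "0 < M"
      unfolding M_def using r y ts by (intro radial_profile_base_pos) auto
    have MP: "M \<le> P"
      unfolding M_def P_def using r y ts by simp
    have "P powr (p - 1) \<le> M powr (p - 1)"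
      using p M MP by (intro powr_mono2') auto
    then have "p * (P powr (p - 1) - M powr (p - 1)) \<le> 0"
      using p by (simp add: mult_nonneg_nonpos)
    then show "\<exists>d. (radial_profile r p has_real_derivative d) (at y) \<and> d \<le> 0"
      using has_real_derivative_radial_profile[of r y p] mult_nonneg_nonpos[OF r(1)] r y ts
      unfolding M_def P_def by auto
  qed
  then show ?thesis by (simp add: radial_profile_abs)
qed

lemma abs_mono_diff_mult_powr_nonneg:
  fixes f :: "real \<Rightarrow> real"
  assumes mono: "\<And>s t. \<bar>t\<bar> \<le> \<bar>s\<bar> \<Longrightarrow> \<bar>s\<bar> \<le> 1 \<Longrightarrow> f t \<le> f s"
    and a: "a = \<mu> * c + \<nu> * d" and b: "b = \<mu> * d + \<nu> * c" and \<nu>: "\<nu>\<^sup>2 \<le> \<mu>\<^sup>2"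
    and ab: "\<bar>a\<bar> \<le> 1" "\<bar>b\<bar> \<le> 1" and q: "0 \<le> q"
  shows "0 \<le> (f a - f b) * (\<bar>c\<bar> powr q - \<bar>d\<bar> powr q)"
proof -
  have key: "a\<^sup>2 - b\<^sup>2 = (\<mu>\<^sup>2 - \<nu>\<^sup>2) * (c\<^sup>2 - d\<^sup>2)"
    unfolding a b by (simp add: power2_eq_square algebra_simps)
  show ?thesis
  proof (cases "\<bar>d\<bar> \<le> \<bar>c\<bar>")
    case True
    then have "0 \<le> a\<^sup>2 - b\<^sup>2"
      unfolding key using \<nu> by (intro mult_nonneg_nonneg) (auto simp: abs_le_square_iff)
    then have "f b \<le> f a" "\<bar>d\<bar> powr q \<le> \<bar>c\<bar> powr q"
      using True ab q by (auto intro!: mono powr_mono2 simp: abs_le_square_iff)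
    then show ?thesis by simp
  next
    case False
    then have "a\<^sup>2 - b\<^sup>2 \<le> 0"
      unfolding key using \<nu> by (intro mult_nonneg_nonpos) (auto simp: abs_le_square_iff)
    then have "f a \<le> f b" "\<bar>c\<bar> powr q \<le> \<bar>d\<bar> powr q"
      using False ab q by (auto intro!: mono powr_mono2 simp: abs_le_square_iff)
    then show ?thesis by (simp add: mult_nonpos_nonpos)
  qed
qed

section \<open>Comparing directions\<close>

definition reflection :: "'a::real_inner \<Rightarrow> 'a \<Rightarrow> 'a" where
  "reflection w v = v - (2 * (v \<bullet> w) / (w \<bullet> w)) *\<^sub>R w"

lemma linear_reflection: "linear (reflection w)"
  by (rule linearI) (simp_all add: reflection_def inner_add_left algebra_simps add_divide_distrib)

lemma inner_reflection_reflection: "reflection w v \<bullet> reflection w z = v \<bullet> z"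
  by (cases "w \<bullet> w = 0")
     (simp_all add: reflection_def inner_diff_left inner_diff_right inner_commute field_simps)

lemma orthogonal_transformation_reflection: "orthogonal_transformation (reflection w)"
  by (simp add: orthogonal_transformation_def linear_reflection inner_reflection_reflection)

lemma reflection_adjoint: "reflection w v \<bullet> z = v \<bullet> reflection w z"
  by (simp add: reflection_def inner_diff_left inner_diff_right inner_commute algebra_simps)

lemma reflection_orthogonal: "v \<bullet> w = 0 \<Longrightarrow> reflection w v = v"
  by (simp add: reflection_def)

lemma reflection_reflection [simp]: "reflection w (reflection w v) = v"
  by (cases "w \<bullet> w = 0") (simp_all add: reflection_def inner_diff_left field_simps scaleR_diff_left)

lemma reflection_swap:
  assumes "norm a = norm b"
  shows "reflection (a - b) a = b" and "reflection (a - b) b = a"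
proof -
  show *: "reflection (a - b) a = b"
  proof (cases "a = b")
    case False
    have "a \<bullet> a = b \<bullet> b"
      using assms by (simp add: dot_square_norm)
    then have "(a - b) \<bullet> (a - b) = 2 * (a \<bullet> (a - b))"
      by (simp add: inner_diff_left inner_diff_right inner_commute)
    moreover have "(a - b) \<bullet> (a - b) \<noteq> 0"
      using False by simp
    ultimately show ?thesis by (simp add: reflection_def)
  qed (simp add: reflection_def)
  show "reflection (a - b) b = a"
    by (metis * reflection_reflection)
qed

definition J_int :: "real \<Rightarrow> real \<Rightarrow> 'a::euclidean_space \<Rightarrow> 'a \<Rightarrow> real" where
  "J_int e q x l = sphere_avg (\<lambda>\<eta>. norm (\<eta> - x) powr e * \<bar>\<eta> \<bullet> l\<bar> powr q)"

definition sym_weight :: "real \<Rightarrow> 'a::real_normed_vector \<Rightarrow> 'a \<Rightarrow> real" where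
  "sym_weight e x \<eta> = (norm (\<eta> - x) powr e + norm (\<eta> + x) powr e) / 2"

lemma sphere_admissible_sym_weight:
  fixes x :: "'a::euclidean_space"
  assumes "norm x < 1"
  shows "sphere_admissible (sym_weight e x)"
proof -
  have "sphere_admissible (\<lambda>\<eta>. 1/2 * (norm (\<eta> - x) powr e + norm (\<eta> - (- x)) powr e))"
    using assms
    by (intro sphere_admissible_mult sphere_admissible_const sphere_admissible_add sphere_admissible_dist_powr) auto
  moreover have "sym_weight e x = (\<lambda>\<eta>. 1/2 * (norm (\<eta> - x) powr e + norm (\<eta> - (- x)) powr e))"
    by (simp add: fun_eq_iff sym_weight_def)
  ultimately show ?thesis by simp
qed

lemma J_int_orthogonal_transformation:
  fixes T :: "'a::euclidean_space \<Rightarrow> 'a"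
  assumes T: "orthogonal_transformation T"
  shows "J_int e q (T x) (T l) = J_int e q x l"
proof -
  have "norm (T \<eta> - T x) = norm (\<eta> - x)" for \<eta>
    using T by (simp add: orthogonal_transformation_isometry flip: dist_norm)
  moreover have "T \<eta> \<bullet> T l = \<eta> \<bullet> l" for \<eta>
    using T by (simp add: orthogonal_transformation_def)
  ultimately show ?thesis
    using sphere_avg_orthogonal_transformation[OF T,
        of "\<lambda>\<eta>. norm (\<eta> - T x) powr e * \<bar>\<eta> \<bullet> T l\<bar> powr q"]
    by (simp add: J_int_def)
qed

lemma J_int_sym_weight:
  fixes x :: "'a::euclidean_space"
  assumes x: "norm x < 1" and q: "0 < q"
  shows "J_int e q x l = sphere_avg (\<lambda>\<eta>. sym_weight e x \<eta> * \<bar>\<eta> \<bullet> l\<bar> powr q)"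
proof -
  define K where "K \<eta> = \<bar>\<eta> \<bullet> l\<bar> powr q" for \<eta> :: 'a
  have K: "sphere_admissible K"
    unfolding K_def[abs_def] using q by (rule sphere_admissible_abs_inner_powr)
  have minus: "sphere_admissible (\<lambda>\<eta>. norm (\<eta> - x) powr e * K \<eta>)"
    using x by (intro sphere_admissible_mult sphere_admissible_dist_powr K)
  have "sphere_admissible (\<lambda>\<eta>. norm (\<eta> - (- x)) powr e * K \<eta>)"
    using x by (intro sphere_admissible_mult sphere_admissible_dist_powr K) simp
  then have plus: "sphere_admissible (\<lambda>\<eta>. norm (\<eta> + x) powr e * K \<eta>)"
    by simp
  have "sphere_avg (\<lambda>\<eta>. norm (\<eta> + x) powr e * K \<eta>) = J_int e q x l"
    using sphere_avg_orthogonal_transformation[OF orthogonal_transformation_neg[THEN iffD2, OF orthogonal_transformation_id],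
        of "\<lambda>\<eta>. norm (\<eta> + x) powr e * K \<eta>"]
    by (simp add: J_int_def K_def norm_minus_commute)
  then have "J_int e q x l
      = 1/2 * (sphere_avg (\<lambda>\<eta>. norm (\<eta> - x) powr e * K \<eta>) + sphere_avg (\<lambda>\<eta>. norm (\<eta> + x) powr e * K \<eta>))"
    by (simp add: J_int_def K_def)
  also have "\<dots> = sphere_avg (\<lambda>\<eta>. 1/2 * (norm (\<eta> - x) powr e * K \<eta> + norm (\<eta> + x) powr e * K \<eta>))"
    by (simp only: sphere_avg_cmult sphere_avg_add[OF minus plus])
  also have "\<dots> = sphere_avg (\<lambda>\<eta>. sym_weight e x \<eta> * K \<eta>)"
    by (simp add: sym_weight_def algebra_simps add_divide_distrib)
  finally show ?thesis
    by (simp add: K_def)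
qed

lemma J_int_diff_reflection:
  fixes x l1 l2 :: "'a::euclidean_space"
  assumes x: "norm x < 1" and q: "0 < q" and l: "norm l1 = norm l2"
  defines "R \<equiv> reflection (l1 - l2)"
  shows "2 * (J_int e q x l1 - J_int e q x l2)
       = sphere_avg (\<lambda>\<eta>. (sym_weight e x \<eta> - sym_weight e x (R \<eta>)) * (\<bar>\<eta> \<bullet> l1\<bar> powr q - \<bar>\<eta> \<bullet> l2\<bar> powr q))"
proof -
  define W where "W = sym_weight e x"
  define K1 K2 where "K1 \<eta> = \<bar>\<eta> \<bullet> l1\<bar> powr q" and "K2 \<eta> = \<bar>\<eta> \<bullet> l2\<bar> powr q" for \<eta> :: 'a
  have R: "orthogonal_transformation R"
    unfolding R_def by (rule orthogonal_transformation_reflection)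
  have K_R: "K1 (R \<eta>) = K2 \<eta>" "K2 (R \<eta>) = K1 \<eta>" for \<eta>
    using reflection_swap[OF l] by (simp_all add: K1_def K2_def R_def reflection_adjoint)
  have W: "sphere_admissible W" "sphere_admissible (\<lambda>\<eta>. W (R \<eta>))"
    unfolding W_def using x R by (auto intro: sphere_admissible_sym_weight sphere_admissible_orthogonal_transformation)
  have K: "sphere_admissible K1" "sphere_admissible K2"
    unfolding K1_def[abs_def] K2_def[abs_def] using q by (auto intro: sphere_admissible_abs_inner_powr)
  have WK: "sphere_admissible (\<lambda>\<eta>. W \<eta> * K1 \<eta>)" "sphere_admissible (\<lambda>\<eta>. W \<eta> * K2 \<eta>)"
      "sphere_admissible (\<lambda>\<eta>. W (R \<eta>) * K1 \<eta>)" "sphere_admissible (\<lambda>\<eta>. W (R \<eta>) * K2 \<eta>)"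
    using W K by (auto intro: sphere_admissible_mult)
  have swap: "sphere_avg (\<lambda>\<eta>. W \<eta> * K1 \<eta>) = sphere_avg (\<lambda>\<eta>. W (R \<eta>) * K2 \<eta>)"
    "sphere_avg (\<lambda>\<eta>. W \<eta> * K2 \<eta>) = sphere_avg (\<lambda>\<eta>. W (R \<eta>) * K1 \<eta>)"
    using sphere_avg_orthogonal_transformation[OF R, of "\<lambda>\<eta>. W \<eta> * K1 \<eta>"]
      sphere_avg_orthogonal_transformation[OF R, of "\<lambda>\<eta>. W \<eta> * K2 \<eta>"] WK(1,2)
    by (simp_all add: sphere_admissible_def K_R)
  have J: "J_int e q x l1 = sphere_avg (\<lambda>\<eta>. W \<eta> * K1 \<eta>)" "J_int e q x l2 = sphere_avg (\<lambda>\<eta>. W \<eta> * K2 \<eta>)"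
    unfolding W_def K1_def K2_def using x q by (simp_all add: J_int_sym_weight)
  have "2 * (J_int e q x l1 - J_int e q x l2)
      = (sphere_avg (\<lambda>\<eta>. W \<eta> * K1 \<eta>) - sphere_avg (\<lambda>\<eta>. W (R \<eta>) * K1 \<eta>))
        + (sphere_avg (\<lambda>\<eta>. W (R \<eta>) * K2 \<eta>) - sphere_avg (\<lambda>\<eta>. W \<eta> * K2 \<eta>))"
    unfolding J swap by simp
  also have "\<dots> = sphere_avg (\<lambda>\<eta>. (W \<eta> * K1 \<eta> - W (R \<eta>) * K1 \<eta>) + (W (R \<eta>) * K2 \<eta> - W \<eta> * K2 \<eta>))"
    using WK by (simp add: sphere_avg_add sphere_avg_diff sphere_admissible_diff)
  also have "\<dots> = sphere_avg (\<lambda>\<eta>. (W \<eta> - W (R \<eta>)) * (K1 \<eta> - K2 \<eta>))"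
    by (simp add: algebra_simps)
  finally show ?thesis
    by (simp add: W_def K1_def K2_def)
qed

lemma sym_weight_radial_profile:
  fixes x u \<eta> :: "'a::euclidean_space"
  assumes x: "norm x < 1" "x = norm x *\<^sub>R u" and u: "norm u = 1" and \<eta>: "norm \<eta> = 1"
  shows "sym_weight e x \<eta> = radial_profile (norm x) (e/2) (\<eta> \<bullet> u)"
proof -
  have dist_powr: "norm (\<eta> - s *\<^sub>R u) powr e = (1 + s\<^sup>2 - 2 * s * (\<eta> \<bullet> u)) powr (e/2)"
    if "\<bar>s\<bar> < 1" for s
  proof -
    have "\<eta> - s *\<^sub>R u \<noteq> 0"
      using that u \<eta> by (auto simp: abs_less_iff)
    then have "norm (\<eta> - s *\<^sub>R u) ^ 2 = norm (\<eta> - s *\<^sub>R u) powr 2"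
      by (simp add: powr_numeral)
    then have "norm (\<eta> - s *\<^sub>R u) powr e = (norm (\<eta> - s *\<^sub>R u) ^ 2) powr (e/2)"
      by (simp only: powr_powr) simp
    also have "norm (\<eta> - s *\<^sub>R u) ^ 2 = \<eta> \<bullet> \<eta> - 2 * s * (\<eta> \<bullet> u) + s\<^sup>2 * (u \<bullet> u)"
      unfolding power2_norm_eq_inner
      by (simp add: inner_diff_left inner_diff_right inner_commute power2_eq_square algebra_simps)
    also have "\<dots> = 1 + s\<^sup>2 - 2 * s * (\<eta> \<bullet> u)"
      using u \<eta> by (simp add: dot_square_norm)
    finally show ?thesis .
  qed
  have "\<eta> - x = \<eta> - norm x *\<^sub>R u" "\<eta> + x = \<eta> - (- norm x) *\<^sub>R u"
    using x by (metis, simp add: x(2)[symmetric])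
  then show ?thesis
    using dist_powr[of "norm x"] dist_powr[of "- norm x"] x
    by (simp add: sym_weight_def radial_profile_def)
qed

text \<open>Since \<open>(\<eta> \<bullet> u)\<^sup>2 - (\<eta> \<bullet> R u)\<^sup>2 = (\<mu>\<^sup>2 - \<nu>\<^sup>2) * ((\<eta> \<bullet> l1)\<^sup>2 - (\<eta> \<bullet> l2)\<^sup>2)\<close>, the
  values \<open>\<bar>\<eta> \<bullet> u\<bar>, \<bar>\<eta> \<bullet> R u\<bar>\<close> are ordered like \<open>\<bar>\<eta> \<bullet> l1\<bar>, \<bar>\<eta> \<bullet> l2\<bar>\<close>; so when
  \<open>\<sigma>\<close> times the profile increases in \<open>\<bar>s\<bar>\<close>, \<open>\<sigma>\<close> times the integrand in
  \<open>J_int_diff_reflection\<close> is nonnegative.\<close>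

lemma J_int_compare:
  fixes x u l1 l2 :: "'a::euclidean_space"
  assumes x: "norm x < 1" "x = norm x *\<^sub>R u" and u: "norm u = 1" and q: "0 < q"
    and l: "norm l1 = 1" "norm l2 = 1" and span: "u = \<mu> *\<^sub>R l1 + \<nu> *\<^sub>R l2" "\<nu>\<^sup>2 \<le> \<mu>\<^sup>2"
    and mono: "\<And>s t. \<bar>t\<bar> \<le> \<bar>s\<bar> \<Longrightarrow> \<bar>s\<bar> \<le> 1
                 \<Longrightarrow> \<sigma> * radial_profile (norm x) (e/2) t \<le> \<sigma> * radial_profile (norm x) (e/2) s"
  shows "0 \<le> \<sigma> * (J_int e q x l1 - J_int e q x l2)"
proof -
  define R where "R = reflection (l1 - l2)"
  have R: "orthogonal_transformation R"
    unfolding R_def by (rule orthogonal_transformation_reflection)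
  have Ru: "R u = \<mu> *\<^sub>R l2 + \<nu> *\<^sub>R l1"
    using reflection_swap[of l1 l2] l linear_reflection[of "l1 - l2"]
    by (simp add: R_def span(1) linear_add linear_scale)
  have "0 \<le> \<sigma> * ((sym_weight e x \<eta> - sym_weight e x (R \<eta>)) * (\<bar>\<eta> \<bullet> l1\<bar> powr q - \<bar>\<eta> \<bullet> l2\<bar> powr q))"
    if "\<eta> \<in> sphere 0 1" for \<eta>
  proof -
    have \<eta>: "norm \<eta> = 1" "norm (R \<eta>) = 1"
      using that R by (simp_all add: orthogonal_transformation_norm)
    have "sym_weight e x \<eta> = radial_profile (norm x) (e/2) (\<eta> \<bullet> u)"
      "sym_weight e x (R \<eta>) = radial_profile (norm x) (e/2) (\<eta> \<bullet> R u)"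
      using sym_weight_radial_profile[OF x u] \<eta> by (simp_all add: R_def reflection_adjoint)
    moreover have "0 \<le> (\<sigma> * radial_profile (norm x) (e/2) (\<eta> \<bullet> u) - \<sigma> * radial_profile (norm x) (e/2) (\<eta> \<bullet> R u))
                      * (\<bar>\<eta> \<bullet> l1\<bar> powr q - \<bar>\<eta> \<bullet> l2\<bar> powr q)"
    proof (rule abs_mono_diff_mult_powr_nonneg[where f = "\<lambda>s. \<sigma> * radial_profile (norm x) (e/2) s"])
      show "\<bar>\<eta> \<bullet> u\<bar> \<le> 1" "\<bar>\<eta> \<bullet> R u\<bar> \<le> 1"
        using Cauchy_Schwarz_ineq2[of \<eta> u] Cauchy_Schwarz_ineq2[of \<eta> "R u"] \<eta> u R
        by (simp_all add: orthogonal_transformation_norm)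
      show "\<eta> \<bullet> u = \<mu> * (\<eta> \<bullet> l1) + \<nu> * (\<eta> \<bullet> l2)"
        by (simp add: span(1) inner_add_right)
      show "\<eta> \<bullet> R u = \<mu> * (\<eta> \<bullet> l2) + \<nu> * (\<eta> \<bullet> l1)"
        by (simp add: Ru inner_add_right)
    qed (use mono span(2) q in auto)
    ultimately show ?thesis
      by (simp add: algebra_simps)
  qed
  then have "0 \<le> sphere_avg (\<lambda>\<eta>. \<sigma> * ((sym_weight e x \<eta> - sym_weight e x (R \<eta>))
                                    * (\<bar>\<eta> \<bullet> l1\<bar> powr q - \<bar>\<eta> \<bullet> l2\<bar> powr q)))"
    by (rule sphere_avg_nonneg)
  also have "\<dots> = 2 * (\<sigma> * (J_int e q x l1 - J_int e q x l2))"
    using J_int_diff_reflection[OF x(1) q, of l1 l2 e] l by (simp add: sphere_avg_cmult R_def)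
  finally show ?thesis by simp
qed

lemma J_int_le_axis:
  fixes x u l :: "'a::euclidean_space"
  assumes x: "norm x < 1" "x = norm x *\<^sub>R u" and u: "norm u = 1" and q: "0 < q"
    and l: "norm l = 1" and e: "e \<le> 0 \<or> 2 \<le> e"
  shows "J_int e q x l \<le> J_int e q x u"
  using J_int_compare[OF x u q u l, of 1 0 1 e] radial_profile_mono_convex[of "norm x" "e/2"] x e
  by simp

lemma J_int_axis_le:
  fixes x u l :: "'a::euclidean_space"
  assumes x: "norm x < 1" "x = norm x *\<^sub>R u" and u: "norm u = 1" and q: "0 < q"
    and l: "norm l = 1" and e: "0 \<le> e" "e \<le> 2"
  shows "J_int e q x u \<le> J_int e q x l"
  using J_int_compare[OF x u q u l, of 1 0 "-1" e] radial_profile_antimono_concave[of "norm x" "e/2"] x e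
  by simp

lemma J_int_eq_orthogonal:
  fixes x u m m' :: "'a::euclidean_space"
  assumes "x = norm x *\<^sub>R u" and "m \<bullet> u = 0" "m' \<bullet> u = 0" and "norm m = norm m'"
  shows "J_int e q x m = J_int e q x m'"
proof -
  have "x \<bullet> (m - m') = 0"
    using assms by (metis inner_diff_right inner_commute inner_scaleR_left mult_zero_right diff_self)
  then have "reflection (m - m') x = x"
    by (rule reflection_orthogonal)
  then show ?thesis
    using J_int_orthogonal_transformation[OF orthogonal_transformation_reflection[of "m - m'"], of e q x m]
      reflection_swap(1)[OF assms(4)] by simp
qed

lemma J_int_le_orthogonal:
  fixes x u l m :: "'a::euclidean_space"
  assumes x: "norm x < 1" "x = norm x *\<^sub>R u" and u: "norm u = 1" and q: "0 < q"
    and l: "norm l = 1" and m: "norm m = 1" "m \<bullet> u = 0" and e: "0 \<le> e" "e \<le> 2"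
  shows "J_int e q x l \<le> J_int e q x m"
proof (cases "l \<bullet> u = 0")
  case True
  then show ?thesis
    using J_int_eq_orthogonal[OF x(2) True m(2)] l m by simp
next
  case False
  define t w where "t = l \<bullet> u" and "w = l - t *\<^sub>R u"
  have w: "w \<bullet> u = 0"
    using u by (simp add: w_def t_def inner_diff_left dot_square_norm)
  have norm_w: "norm w ^ 2 = 1 - t\<^sup>2"
  proof -
    have "norm w ^ 2 = l \<bullet> l - 2 * t * (l \<bullet> u) + t\<^sup>2 * (u \<bullet> u)"
      unfolding power2_norm_eq_inner w_def
      by (simp add: inner_diff_left inner_diff_right inner_commute power2_eq_square algebra_simps)
    then show ?thesis
      using l u by (simp add: t_def dot_square_norm power2_eq_square)
  qed
  define \<rho> where "\<rho> = norm w"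
  have coeffs: "(- \<rho> / t)\<^sup>2 \<le> (1 / t)\<^sup>2"
    using norm_w by (simp add: \<rho>_def power_divide divide_right_mono)
  obtain m' where m': "norm m' = 1" "m' \<bullet> u = 0" "w = \<rho> *\<^sub>R m'"
  proof (cases "w = 0")
    case True
    then show ?thesis using that[of m] m by (simp add: \<rho>_def)
  next
    case False
    then show ?thesis using that[of "w /\<^sub>R norm w"] w by (simp add: \<rho>_def)
  qed
  have "u = (1 / t) *\<^sub>R (l - w)"
    using False by (simp add: w_def t_def)
  also have "\<dots> = (1 / t) *\<^sub>R l + (- \<rho> / t) *\<^sub>R m'"
    by (simp add: m'(3) algebra_simps)
  finally have "u = (1 / t) *\<^sub>R l + (- \<rho> / t) *\<^sub>R m'" .
  then have "J_int e q x l \<le> J_int e q x m'"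
    using J_int_compare[OF x u q l m'(1) _ coeffs, of "-1" e]
      radial_profile_antimono_concave[of "norm x" "e/2"] x e by simp
  also have "\<dots> = J_int e q x m"
    using J_int_eq_orthogonal[OF x(2) m'(2) m(2)] m m' by simp
  finally show ?thesis .
qed

lemma obtain_unit_direction:
  fixes x :: "'a::euclidean_space"
  obtains u where "norm u = 1" "x = norm x *\<^sub>R u"
proof (cases "x = 0")
  case True
  obtain b :: 'a where "b \<in> Basis"
    using nonempty_Basis by blast
  then show ?thesis using that[of b] True by simp
next
  case False
  then show ?thesis using that[of "x /\<^sub>R norm x"] by simp
qed

lemma J_int_constant:
  fixes x :: "'a::euclidean_space"
  assumes x: "norm x < 1" and q: "0 < q" and e: "e = 0 \<or> e = 2"
  shows "\<exists>c. \<forall>l \<in> sphere 0 1. J_int e q x l = c"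
proof -
  obtain u where u: "norm u = 1" "x = norm x *\<^sub>R u"
    by (rule obtain_unit_direction)
  show ?thesis
    using J_int_le_axis[OF x u(2,1) q] J_int_axis_le[OF x u(2,1) q] e
    by (intro exI[of _ "J_int e q x u"]) (force intro: order_antisym)
qed

lemma SUP_J_int_sphere:
  fixes x e1 m :: "'a::euclidean_space"
  assumes e1: "norm e1 = 1" and m: "norm m = 1"
    and max: "\<And>l. norm l = 1 \<Longrightarrow> J_int e q (norm x *\<^sub>R e1) l \<le> J_int e q (norm x *\<^sub>R e1) m"
  shows "(SUP l \<in> sphere 0 1. J_int e q x l) = J_int e q (norm x *\<^sub>R e1) m"
proof -
  obtain u where u: "norm u = 1" "x = norm x *\<^sub>R u"
    by (rule obtain_unit_direction)
  define R where "R = reflection (u - e1)"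
  have R: "orthogonal_transformation R"
    unfolding R_def by (rule orthogonal_transformation_reflection)
  have "R x = norm x *\<^sub>R e1"
    using reflection_swap(1)[of u e1] u e1 linear_reflection[of "u - e1"]
    by (metis R_def linear_scale)
  then have J: "J_int e q x l = J_int e q (norm x *\<^sub>R e1) (R l)" for l
    using J_int_orthogonal_transformation[OF R, of e q x l] by simp
  show ?thesis
  proof (rule cSup_eq_maximum)
    show "J_int e q (norm x *\<^sub>R e1) m \<in> J_int e q x ` sphere 0 1"
    proof (rule rev_image_eqI)
      show "R m \<in> sphere 0 1"
        using R m by (simp add: orthogonal_transformation_norm)
      show "J_int e q (norm x *\<^sub>R e1) m = J_int e q x (R m)"
        using J[of "R m"] by (simp add: R_def)
    qed
    show "y \<le> J_int e q (norm x *\<^sub>R e1) m" if "y \<in> J_int e q x ` sphere 0 1" for y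
      using that J max R by (auto simp: orthogonal_transformation_norm)
  qed
qed

lemma I_int_eq_J_int:
  "I_int \<alpha> q x l = J_int ((real DIM('a) - \<alpha>) * q - 2 * real DIM('a) + 2) q (x :: 'a::euclidean_space) l"
  by (simp add: I_int_def J_int_def)

lemma l_vec_unit:
  fixes e1 e2 :: "'a::real_inner"
  assumes "norm e1 = 1" "norm e2 = 1" "e1 \<bullet> e2 = 0"
  shows "norm (l_vec e1 e2 \<beta>) = 1"
proof -
  have "e1 \<bullet> e1 = 1" "e2 \<bullet> e2 = 1" "e2 \<bullet> e1 = 0"
    using assms by (simp_all add: dot_square_norm inner_commute)
  then have "l_vec e1 e2 \<beta> \<bullet> l_vec e1 e2 \<beta> = (cos \<beta>)\<^sup>2 + (sin \<beta>)\<^sup>2"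
    using assms by (simp add: l_vec_def inner_add_left inner_add_right power2_eq_square)
  then show ?thesis
    by (simp add: norm_eq_1)
qed

theorem corollary2p2:
  fixes \<alpha> q :: real and x e1 e2 :: "'a::euclidean_space"
  assumes "DIM('a) \<ge> 3" and "\<alpha> < 1" and "q \<ge> 1" and "x \<in> ball 0 1"
    and "e1 \<in> Basis" and "e2 \<in> Basis" and "e1 \<noteq> e2"
  shows "(q = (2 * real DIM('a) - 2) / (real DIM('a) - \<alpha>) \<or> q = 2 * real DIM('a) / (real DIM('a) - \<alpha>)
           \<longrightarrow> (\<exists>c. \<forall>l \<in> sphere 0 1. I_int \<alpha> q x l = c))
       \<and> ((2 * real DIM('a) - 2) / (real DIM('a) - \<alpha>) < q \<and> q < 2 * real DIM('a) / (real DIM('a) - \<alpha>)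
           \<longrightarrow> (SUP l \<in> sphere 0 1. I_int \<alpha> q x l) = I_int \<alpha> q (norm x *\<^sub>R e1) (l_vec e1 e2 (pi/2))
             \<and> (\<forall>\<beta> \<in> {0..pi/2}. I_int \<alpha> q (norm x *\<^sub>R e1) (l_vec e1 e2 \<beta>)
                    \<le> I_int \<alpha> q (norm x *\<^sub>R e1) (l_vec e1 e2 (pi/2))))
       \<and> (q < (2 * real DIM('a) - 2) / (real DIM('a) - \<alpha>) \<or> q > 2 * real DIM('a) / (real DIM('a) - \<alpha>)
           \<longrightarrow> (SUP l \<in> sphere 0 1. I_int \<alpha> q x l) = I_int \<alpha> q (norm x *\<^sub>R e1) (l_vec e1 e2 0)
             \<and> (\<forall>\<beta> \<in> {0..pi/2}. I_int \<alpha> q (norm x *\<^sub>R e1) (l_vec e1 e2 \<beta>)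
                    \<le> I_int \<alpha> q (norm x *\<^sub>R e1) (l_vec e1 e2 0)))"
proof -
  define n where "n = real DIM('a)"
  define e where "e = (n - \<alpha>) * q - 2 * n + 2"
  have I: "I_int \<alpha> q y l = J_int e q y l" for y l :: 'a
    by (simp add: I_int_eq_J_int e_def n_def)
  have "0 < n - \<alpha>"
    using assms(1,2) by (simp add: n_def)
  then have thresholds:
      "q = (2 * n - 2) / (n - \<alpha>) \<longleftrightarrow> e = 0" "q = 2 * n / (n - \<alpha>) \<longleftrightarrow> e = 2"
      "(2 * n - 2) / (n - \<alpha>) < q \<longleftrightarrow> 0 < e" "q < 2 * n / (n - \<alpha>) \<longleftrightarrow> e < 2"
      "q < (2 * n - 2) / (n - \<alpha>) \<longleftrightarrow> e < 0" "2 * n / (n - \<alpha>) < q \<longleftrightarrow> 2 < e"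
    by (auto simp: e_def field_simps)
  have x: "norm x < 1" and q: "0 < q"
    using assms(3,4) by simp_all
  have e12: "norm e1 = 1" "norm e2 = 1" "e2 \<bullet> e1 = 0"
    using assms(5-7) by (simp_all add: inner_Basis)
  have x': "norm (norm x *\<^sub>R e1) < 1" "norm x *\<^sub>R e1 = norm (norm x *\<^sub>R e1) *\<^sub>R e1"
    using x e12 by simp_all
  have l_vec: "norm (l_vec e1 e2 \<beta>) = 1" for \<beta>
    using e12 by (intro l_vec_unit) (simp_all add: inner_commute)
  let ?J = "J_int e q (norm x *\<^sub>R e1)"
  have maximum: "(SUP l \<in> sphere 0 1. J_int e q x l) = ?J m \<and> (\<forall>\<beta>. ?J (l_vec e1 e2 \<beta>) \<le> ?J m)"
    if "norm m = 1" and "\<And>l. norm l = 1 \<Longrightarrow> ?J l \<le> ?J m" for m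
    using SUP_J_int_sphere[OF e12(1) that] that(2)[OF l_vec] by blast
  have "?J l \<le> ?J e2" if "0 < e" "e < 2" "norm l = 1" for l
    using J_int_le_orthogonal[OF x' e12(1) q that(3) e12(2,3)] that(1,2) by simp
  moreover have "?J l \<le> ?J e1" if "e < 0 \<or> 2 < e" "norm l = 1" for l
    using J_int_le_axis[OF x' e12(1) q that(2)] that(1) by auto
  ultimately show ?thesis
    unfolding n_def[symmetric] I thresholds
    using J_int_constant[OF x q] maximum[OF e12(1)] maximum[OF e12(2)]
    by (auto simp: l_vec_def)
qed

end
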